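(* Let $0\to V\to\widehat A\xrightarrow{j}A\to0$ be an abelian extension of a Com-PreLie algebra $A$ by a representation $(V,\mu,l,r)$ inducing that representation. Then there is an exact sequence $$0\longrightarrow\mathcal Z^1(A,V)\xrightarrow{\ \iota\ }\mathrm{Aut}_V(\widehat A)\xrightarrow{\ \tau\ }\mathcal C\xrightarrow{\ \mathcal W\ }\mathcal H^2(A,V),$$ where $\iota$ is the injective group homomorphism obtained by composing the isomorphism $\mathcal Z^1(A,V)\cong\mathrm{Aut}^A_V(\widehat A)$ (inverse of $\gamma\mapsto\gamma s-s$) with the inclusion $\mathrm{Aut}^A_V(\widehat A)\subseteq\mathrm{Aut}_V(\widehat A)$. Exactness means: $\iota$ is injective; $\tau$ takes values in $\mathcal C$ and $\ker\tau=\iota(\mathcal Z^1(A,V))$; and $\tau(\mathrm{Aut}_V(\widehat A))=\{(\beta,\alpha)\in\mathcal C:\mathcal W(\beta,\alpha)=0\}$.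
   Context: All vector spaces are over a field of characteristic $0$. A Com-PreLie algebra is a triple $(A,\ast,\bullet)$ where $A$ is a vector space, $\ast$ is a commutative associative bilinear product on $A$, and $\bullet$ is a bilinear product on $A$ satisfying the left pre-Lie identity $(x\bullet y)\bullet z-x\bullet(y\bullet z)=(y\bullet x)\bullet z-y\bullet(x\bullet z)$ and the compatibility $x\bullet(y\ast z)=(x\bullet y)\ast z+y\ast(x\bullet z)$ for all $x,y,z\in A$. A homomorphism of Com-PreLie algebras is a linear map preserving both products. A representation of $A$ is a quadruple $(V,\mu,l,r)$ with $V$ a vector space and $\mu,l,r:A\to\mathrm{End}(V)$ linear maps satisfying, for all $x,y\in A$: $\mu(x\ast y)=\mu(x)\mu(y)$; $l(x\bullet y)-l(x)l(y)=l(y\bullet x)-l(y)l(x)$; $r(y)l(x)-l(x)r(y)=r(y)r(x)-r(x\bullet y)$; $l(x)\mu(y)=\mu(x\bullet y)+\mu(y)l(x)$; $r(x\ast y)=\mu(y)r(x)+\mu(x)r(y)$. A 2-cocycle of $A$ with coefficients in $V$ is a pair $(\phi,\psi)$ of bilinear maps $A\times A\to V$, with $\phi$ symmetric, such that for all $x,y,z\in A$: (C1) $\phi(x,y\ast z)+\mu(x)\phi(y,z)-\phi(x\ast y,z)-\mu(z)\phi(x,y)=0$; (C2) $\psi(x\bullet y,z)+r(z)\psi(x,y)-\psi(x,y\bullet z)-l(x)\psi(y,z)-\psi(y\bullet x,z)-r(z)\psi(y,x)+\psi(y,x\bullet z)+l(y)\psi(x,z)=0$; (C3) $\psi(x,y\ast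 z)+l(x)\phi(y,z)-\phi(x\bullet y,z)-\mu(z)\psi(x,y)-\phi(y,x\bullet z)-\mu(y)\psi(x,z)=0$. A 2-coboundary is a pair $(x,y)\mapsto(\mu(x)f(y)-f(x\ast y)+\mu(y)f(x),\ l(x)f(y)-f(x\bullet y)+r(y)f(x))$ for a linear $f:A\to V$; $\mathcal H^2(A,V)$ is the quotient of the space of 2-cocycles by the subspace of 2-coboundaries. $\mathcal Z^1(A,V)$ is the additive group of linear maps $N:A\to V$ with $\mu(x)N(y)-N(x\ast y)+\mu(y)N(x)=0$ and $l(x)N(y)-N(x\bullet y)+r(y)N(x)=0$ for all $x,y$. An abelian extension of $A$ by $V$ is a Com-PreLie algebra $(\widehat A,\ast_{\widehat A},\bullet_{\widehat A})$ with a short exact sequence $0\to V\xrightarrow{i}\widehat A\xrightarrow{j}A\to0$ of Com-PreLie algebra homomorphisms, $V$ carrying the zero products; $V$ is identified with $i(V)=\ker j$. It induces the given representation if for any linear section $s$ of $j$ ($j\circ s=\mathrm{id}_A$): $\mu(x)u=s(x)\ast_{\widehat A}u$, $l(x)u=s(x)\bullet_{\widehat A}u$, $r(x)u=u\bullet_{\widehat A}s(x)$. Fix such a section $s$ and let $(\phi,\psi)$ be the 2-cocycle $\phi(x,y)=s(x)\ast_{\widehat A}s(y)-s(x\ast y)$, $\psi(x,y)=s(x)\bullet_{\widehat A}s(y)-s(x\bullet y)$. $\mathrm{Aut}(A)$ is the group of Com-PreLie algebra automorphisms of $A$; $\mathrm{Aut}(V)$ is the group of linear automorphisms of $V$; $\mathrm{Aut}_V(\widehat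 A)$ is the group of Com-PreLie algebra automorphisms $\gamma$ of $\widehat A$ with $\gamma(V)=V$, and $\mathrm{Aut}^A_V(\widehat A)$ its subgroup of those with $\gamma|_V=\mathrm{id}_V$ and $j\gamma s=\mathrm{id}_A$. The map $\tau:\mathrm{Aut}_V(\widehat A)\to\mathrm{Aut}(V)\times\mathrm{Aut}(A)$ is $\tau(\gamma)=(\gamma|_V,j\gamma s)$. $\mathcal C$ is the group of pairs $(\beta,\alpha)\in\mathrm{Aut}(V)\times\mathrm{Aut}(A)$ with $\beta(\mu(x)u)=\mu(\alpha(x))\beta(u)$, $\beta(l(x)u)=l(\alpha(x))\beta(u)$, $\beta(r(x)u)=r(\alpha(x))\beta(u)$ for all $x\in A,u\in V$. For $(\beta,\alpha)\in\mathcal C$, $(\phi,\psi)^{(\beta,\alpha)}$ is the 2-cocycle $(x,y)\mapsto\big(\beta\phi(\alpha^{-1}x,\alpha^{-1}y),\ \beta\psi(\alpha^{-1}x,\alpha^{-1}y)\big)$, and the Wells map is $\mathcal W(\beta,\alpha)=\big[(\phi,\psi)^{(\beta,\alpha)}-(\phi,\psi)\big]\in\mathcal H^2(A,V)$ (independent of $s$). *)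

theory Defs
  imports Complex_Main
begin

text \<open>Vector spaces over a field 'k of characteristic 0 are modelled as whole types
  of class ab_group_add together with a scalar multiplication satisfying the
  vector_space locale predicate.\<close>

definition lin :: "('k::field \<Rightarrow> 'a::ab_group_add \<Rightarrow> 'a) \<Rightarrow> ('k \<Rightarrow> 'b::ab_group_add \<Rightarrow> 'b) \<Rightarrow> ('a \<Rightarrow> 'b) \<Rightarrow> bool"
  where "lin s1 s2 f \<longleftrightarrow> Vector_Spaces.linear s1 s2 f"

definition bilin ::
  "('k::field \<Rightarrow> 'a::ab_group_add \<Rightarrow> 'a) \<Rightarrow> ('k \<Rightarrow> 'b::ab_group_add \<Rightarrow> 'b) \<Rightarrow> ('k \<Rightarrow> 'c::ab_group_add \<Rightarrow> 'c)
    \<Rightarrow> ('a \<Rightarrow> 'b \<Rightarrow> 'c) \<Rightarrow> bool"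
  where "bilin s1 s2 s3 f \<longleftrightarrow> (\<forall>x. lin s2 s3 (f x)) \<and> (\<forall>y. lin s1 s3 (\<lambda>x. f x y))"

definition com_prelie :: "('k::field \<Rightarrow> 'a::ab_group_add \<Rightarrow> 'a) \<Rightarrow> ('a \<Rightarrow> 'a \<Rightarrow> 'a) \<Rightarrow> ('a \<Rightarrow> 'a \<Rightarrow> 'a) \<Rightarrow> bool"
  where "com_prelie s mul pl \<longleftrightarrow>
     vector_space s \<and> bilin s s s mul \<and> bilin s s s pl
     \<and> (\<forall>x y. mul x y = mul y x)
     \<and> (\<forall>x y z. mul (mul x y) z = mul x (mul y z))
     \<and> (\<forall>x y z. pl (pl x y) z - pl x (pl y z) = pl (pl y x) z - pl y (pl x z))
     \<and> (\<forall>x y z. pl x (mul y z) = mul (pl x y) z + mul y (pl x z))"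

definition com_prelie_hom ::
  "('k::field \<Rightarrow> 'a::ab_group_add \<Rightarrow> 'a) \<Rightarrow> ('a \<Rightarrow> 'a \<Rightarrow> 'a) \<Rightarrow> ('a \<Rightarrow> 'a \<Rightarrow> 'a)
   \<Rightarrow> ('k \<Rightarrow> 'b::ab_group_add \<Rightarrow> 'b) \<Rightarrow> ('b \<Rightarrow> 'b \<Rightarrow> 'b) \<Rightarrow> ('b \<Rightarrow> 'b \<Rightarrow> 'b) \<Rightarrow> ('a \<Rightarrow> 'b) \<Rightarrow> bool"
  where "com_prelie_hom s1 m1 p1 s2 m2 p2 f \<longleftrightarrow>
     lin s1 s2 f \<and> (\<forall>x y. f (m1 x y) = m2 (f x) (f y)) \<and> (\<forall>x y. f (p1 x y) = p2 (f x) (f y))"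

definition com_prelie_auts :: "('k::field \<Rightarrow> 'a::ab_group_add \<Rightarrow> 'a) \<Rightarrow> ('a \<Rightarrow> 'a \<Rightarrow> 'a) \<Rightarrow> ('a \<Rightarrow> 'a \<Rightarrow> 'a) \<Rightarrow> ('a \<Rightarrow> 'a) set"
  where "com_prelie_auts s m p = {g. com_prelie_hom s m p s m p g \<and> bij g}"

definition lin_auts :: "('k::field \<Rightarrow> 'v::ab_group_add \<Rightarrow> 'v) \<Rightarrow> ('v \<Rightarrow> 'v) set"
  where "lin_auts s = {b. lin s s b \<and> bij b}"

definition is_rep ::
  "('k::field \<Rightarrow> 'a::ab_group_add \<Rightarrow> 'a) \<Rightarrow> ('a \<Rightarrow> 'a \<Rightarrow> 'a) \<Rightarrow> ('a \<Rightarrow> 'a \<Rightarrow> 'a)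
   \<Rightarrow> ('k \<Rightarrow> 'v::ab_group_add \<Rightarrow> 'v) \<Rightarrow> ('a \<Rightarrow> 'v \<Rightarrow> 'v) \<Rightarrow> ('a \<Rightarrow> 'v \<Rightarrow> 'v) \<Rightarrow> ('a \<Rightarrow> 'v \<Rightarrow> 'v) \<Rightarrow> bool"
  where "is_rep sA mA pA sV \<mu> l r \<longleftrightarrow>
     vector_space sV \<and> bilin sA sV sV \<mu> \<and> bilin sA sV sV l \<and> bilin sA sV sV r
     \<and> (\<forall>x y u. \<mu> (mA x y) u = \<mu> x (\<mu> y u))
     \<and> (\<forall>x y u. l (pA x y) u - l x (l y u) = l (pA y x) u - l y (l x u))
     \<and> (\<forall>x y u. r y (l x u) - l x (r y u) = r y (r x u) - r (pA x y) u)
     \<and> (\<forall>x y u. l x (\<mu> y u) = \<mu> (pA x y) u + \<mu> y (l x u))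
     \<and> (\<forall>x y u. r (mA x y) u = \<mu> y (r x u) + \<mu> x (r y u))"

definition abelian_extension ::
  "('k::field \<Rightarrow> 'a::ab_group_add \<Rightarrow> 'a) \<Rightarrow> ('a \<Rightarrow> 'a \<Rightarrow> 'a) \<Rightarrow> ('a \<Rightarrow> 'a \<Rightarrow> 'a)
   \<Rightarrow> ('k \<Rightarrow> 'v::ab_group_add \<Rightarrow> 'v)
   \<Rightarrow> ('k \<Rightarrow> 'h::ab_group_add \<Rightarrow> 'h) \<Rightarrow> ('h \<Rightarrow> 'h \<Rightarrow> 'h) \<Rightarrow> ('h \<Rightarrow> 'h \<Rightarrow> 'h)
   \<Rightarrow> ('v \<Rightarrow> 'h) \<Rightarrow> ('h \<Rightarrow> 'a) \<Rightarrow> bool"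
  where "abelian_extension sA mA pA sV sH mH pH i j \<longleftrightarrow>
     com_prelie sA mA pA \<and> com_prelie sH mH pH \<and> com_prelie sV (\<lambda>_ _. 0) (\<lambda>_ _. 0)
     \<and> com_prelie_hom sV (\<lambda>_ _. 0) (\<lambda>_ _. 0) sH mH pH i
     \<and> com_prelie_hom sH mH pH sA mA pA j
     \<and> inj i \<and> surj j \<and> range i = {h. j h = 0}"

definition lin_section ::
  "('k::field \<Rightarrow> 'a::ab_group_add \<Rightarrow> 'a) \<Rightarrow> ('k \<Rightarrow> 'h::ab_group_add \<Rightarrow> 'h) \<Rightarrow> ('h \<Rightarrow> 'a) \<Rightarrow> ('a \<Rightarrow> 'h) \<Rightarrow> bool"
  where "lin_section sA sH j s \<longleftrightarrow> lin sA sH s \<and> (\<forall>x. j (s x) = x)"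

definition induces_rep ::
  "('k::field \<Rightarrow> 'a::ab_group_add \<Rightarrow> 'a) \<Rightarrow> ('k \<Rightarrow> 'h::ab_group_add \<Rightarrow> 'h) \<Rightarrow> ('h \<Rightarrow> 'h \<Rightarrow> 'h) \<Rightarrow> ('h \<Rightarrow> 'h \<Rightarrow> 'h)
   \<Rightarrow> ('v::ab_group_add \<Rightarrow> 'h) \<Rightarrow> ('h \<Rightarrow> 'a)
   \<Rightarrow> ('a \<Rightarrow> 'v \<Rightarrow> 'v) \<Rightarrow> ('a \<Rightarrow> 'v \<Rightarrow> 'v) \<Rightarrow> ('a \<Rightarrow> 'v \<Rightarrow> 'v) \<Rightarrow> bool"
  where "induces_rep sA sH mH pH i j \<mu> l r \<longleftrightarrow>
     (\<forall>s. lin_section sA sH j s \<longrightarrow>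
        (\<forall>x u. i (\<mu> x u) = mH (s x) (i u) \<and> i (l x u) = pH (s x) (i u) \<and> i (r x u) = pH (i u) (s x)))"

definition Z1 ::
  "('k::field \<Rightarrow> 'a::ab_group_add \<Rightarrow> 'a) \<Rightarrow> ('a \<Rightarrow> 'a \<Rightarrow> 'a) \<Rightarrow> ('a \<Rightarrow> 'a \<Rightarrow> 'a)
   \<Rightarrow> ('k \<Rightarrow> 'v::ab_group_add \<Rightarrow> 'v) \<Rightarrow> ('a \<Rightarrow> 'v \<Rightarrow> 'v) \<Rightarrow> ('a \<Rightarrow> 'v \<Rightarrow> 'v) \<Rightarrow> ('a \<Rightarrow> 'v \<Rightarrow> 'v) \<Rightarrow> ('a \<Rightarrow> 'v) set"
  where "Z1 sA mA pA sV \<mu> l r = {N. lin sA sV N \<and>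
     (\<forall>x y. \<mu> x (N y) - N (mA x y) + \<mu> y (N x) = 0) \<and>
     (\<forall>x y. l x (N y) - N (pA x y) + r y (N x) = 0)}"

definition autV :: "('k::field \<Rightarrow> 'h::ab_group_add \<Rightarrow> 'h) \<Rightarrow> ('h \<Rightarrow> 'h \<Rightarrow> 'h) \<Rightarrow> ('h \<Rightarrow> 'h \<Rightarrow> 'h) \<Rightarrow> ('v \<Rightarrow> 'h) \<Rightarrow> ('h \<Rightarrow> 'h) set"
  where "autV sH mH pH i = {g \<in> com_prelie_auts sH mH pH. g ` range i = range i}"

definition restrV :: "('v \<Rightarrow> 'h) \<Rightarrow> ('h \<Rightarrow> 'h) \<Rightarrow> 'v \<Rightarrow> 'v"
  where "restrV i g = (\<lambda>u. inv i (g (i u)))"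

definition autVA :: "('k::field \<Rightarrow> 'h::ab_group_add \<Rightarrow> 'h) \<Rightarrow> ('h \<Rightarrow> 'h \<Rightarrow> 'h) \<Rightarrow> ('h \<Rightarrow> 'h \<Rightarrow> 'h) \<Rightarrow> ('v \<Rightarrow> 'h)
    \<Rightarrow> ('h \<Rightarrow> 'a) \<Rightarrow> ('a \<Rightarrow> 'h) \<Rightarrow> ('h \<Rightarrow> 'h) set"
  where "autVA sH mH pH i j s = {g \<in> autV sH mH pH i. restrV i g = id \<and> (\<lambda>x. j (g (s x))) = id}"

definition tau :: "('v \<Rightarrow> 'h) \<Rightarrow> ('h \<Rightarrow> 'a) \<Rightarrow> ('a \<Rightarrow> 'h) \<Rightarrow> ('h \<Rightarrow> 'h) \<Rightarrow> ('v \<Rightarrow> 'v) \<times> ('a \<Rightarrow> 'a)"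
  where "tau i j s g = (restrV i g, \<lambda>x. j (g (s x)))"

text \<open>iota(N) = the unique gamma in Aut^A_V with gamma s - s = N, namely h |-> h + N(j h).\<close>
definition iota :: "('v \<Rightarrow> 'h::ab_group_add) \<Rightarrow> ('h \<Rightarrow> 'a) \<Rightarrow> ('a \<Rightarrow> 'v) \<Rightarrow> 'h \<Rightarrow> 'h"
  where "iota i j N = (\<lambda>h. h + i (N (j h)))"

definition compat_pairs ::
  "('k::field \<Rightarrow> 'a::ab_group_add \<Rightarrow> 'a) \<Rightarrow> ('a \<Rightarrow> 'a \<Rightarrow> 'a) \<Rightarrow> ('a \<Rightarrow> 'a \<Rightarrow> 'a)
   \<Rightarrow> ('k \<Rightarrow> 'v::ab_group_add \<Rightarrow> 'v) \<Rightarrow> ('a \<Rightarrow> 'v \<Rightarrow> 'v) \<Rightarrow> ('a \<Rightarrow> 'v \<Rightarrow> 'v) \<Rightarrow> ('a \<Rightarrow> 'v \<Rightarrow> 'v)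
   \<Rightarrow> (('v \<Rightarrow> 'v) \<times> ('a \<Rightarrow> 'a)) set"
  where "compat_pairs sA mA pA sV \<mu> l r = {(b, a). b \<in> lin_auts sV \<and> a \<in> com_prelie_auts sA mA pA \<and>
     (\<forall>x u. b (\<mu> x u) = \<mu> (a x) (b u) \<and> b (l x u) = l (a x) (b u) \<and> b (r x u) = r (a x) (b u))}"

definition is_coboundary ::
  "('k::field \<Rightarrow> 'a::ab_group_add \<Rightarrow> 'a) \<Rightarrow> ('a \<Rightarrow> 'a \<Rightarrow> 'a) \<Rightarrow> ('a \<Rightarrow> 'a \<Rightarrow> 'a)
   \<Rightarrow> ('k \<Rightarrow> 'v::ab_group_add \<Rightarrow> 'v) \<Rightarrow> ('a \<Rightarrow> 'v \<Rightarrow> 'v) \<Rightarrow> ('a \<Rightarrow> 'v \<Rightarrow> 'v) \<Rightarrow> ('a \<Rightarrow> 'v \<Rightarrow> 'v)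
   \<Rightarrow> ('a \<Rightarrow> 'a \<Rightarrow> 'v) \<Rightarrow> ('a \<Rightarrow> 'a \<Rightarrow> 'v) \<Rightarrow> bool"
  where "is_coboundary sA mA pA sV \<mu> l r \<phi> \<psi> \<longleftrightarrow>
     (\<exists>f. lin sA sV f \<and> (\<forall>x y. \<phi> x y = \<mu> x (f y) - f (mA x y) + \<mu> y (f x)
                                \<and> \<psi> x y = l x (f y) - f (pA x y) + r y (f x)))"

definition ext_phi :: "('v \<Rightarrow> 'h::ab_group_add) \<Rightarrow> ('a \<Rightarrow> 'h) \<Rightarrow> ('h \<Rightarrow> 'h \<Rightarrow> 'h) \<Rightarrow> ('a \<Rightarrow> 'a \<Rightarrow> 'a) \<Rightarrow> 'a \<Rightarrow> 'a \<Rightarrow> 'v"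
  where "ext_phi i s mH mA x y = inv i (mH (s x) (s y) - s (mA x y))"

definition ext_psi :: "('v \<Rightarrow> 'h::ab_group_add) \<Rightarrow> ('a \<Rightarrow> 'h) \<Rightarrow> ('h \<Rightarrow> 'h \<Rightarrow> 'h) \<Rightarrow> ('a \<Rightarrow> 'a \<Rightarrow> 'a) \<Rightarrow> 'a \<Rightarrow> 'a \<Rightarrow> 'v"
  where "ext_psi i s pH pA x y = inv i (pH (s x) (s y) - s (pA x y))"

text \<open>W(beta, alpha) = 0 in H^2(A,V): the difference (phi,psi)^(beta,alpha) - (phi,psi)
  is a 2-coboundary.\<close>
definition wells_zero ::
  "('k::field \<Rightarrow> 'a::ab_group_add \<Rightarrow> 'a) \<Rightarrow> ('a \<Rightarrow> 'a \<Rightarrow> 'a) \<Rightarrow> ('a \<Rightarrow> 'a \<Rightarrow> 'a)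
   \<Rightarrow> ('k \<Rightarrow> 'v::ab_group_add \<Rightarrow> 'v) \<Rightarrow> ('a \<Rightarrow> 'v \<Rightarrow> 'v) \<Rightarrow> ('a \<Rightarrow> 'v \<Rightarrow> 'v) \<Rightarrow> ('a \<Rightarrow> 'v \<Rightarrow> 'v)
   \<Rightarrow> ('h::ab_group_add \<Rightarrow> 'h \<Rightarrow> 'h) \<Rightarrow> ('h \<Rightarrow> 'h \<Rightarrow> 'h) \<Rightarrow> ('v \<Rightarrow> 'h) \<Rightarrow> ('a \<Rightarrow> 'h)
   \<Rightarrow> ('v \<Rightarrow> 'v) \<Rightarrow> ('a \<Rightarrow> 'a) \<Rightarrow> bool"
  where "wells_zero sA mA pA sV \<mu> l r mH pH i s b a \<longleftrightarrow>
     is_coboundary sA mA pA sV \<mu> l r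
       (\<lambda>x y. b (ext_phi i s mH mA (inv a x) (inv a y)) - ext_phi i s mH mA x y)
       (\<lambda>x y. b (ext_psi i s pH pA (inv a x) (inv a y)) - ext_psi i s pH pA x y)"

end

theory Submission
  imports Defs
begin

(* Through the section s, every element of Ahat is written uniquely as s x + i u. A linear map
   gamma of Ahat preserving V has the shape s x + i u |-> s (alpha x) + i (F x + beta u), where
   (beta, alpha) = tau gamma and F is the V-component of gamma o s. Expanding both products in these
   coordinates, gamma is multiplicative exactly when, at every (x, y), the value of
   (phi, psi)^(beta, alpha) - (phi, psi) at (alpha x, alpha y) is the coboundary of F o alpha^-1.
   This single computation gives all three exactness statements: for (beta, alpha) = (id, id) it says
   that F is a 1-cocycle (kernel of tau), for an automorphism gamma it says that W (tau gamma) = 0, and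
   conversely a compatible pair with W (beta, alpha) = 0 provides F and hence an automorphism gamma
   with tau gamma = (beta, alpha). *)

section \<open>Linear maps\<close>

lemma lin_iff:
  "lin s1 s2 f \<longleftrightarrow> vector_space s1 \<and> vector_space s2
     \<and> (\<forall>x y. f (x + y) = f x + f y) \<and> (\<forall>c x. f (s1 c x) = s2 c (f x))"
  unfolding lin_def by (rule Vector_Spaces.linear_iff)

lemma lin_module_hom: "lin s1 s2 f \<Longrightarrow> module_hom s1 s2 f"
  by (simp add: lin_def module_hom_iff_linear)

lemmas lin_add = module_hom.add[OF lin_module_hom]
  and lin_zero = module_hom.zero[OF lin_module_hom]
  and lin_diff = module_hom.diff[OF lin_module_hom]

lemma lin_id: "vector_space s \<Longrightarrow> lin s s (\<lambda>x. x)"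
  by (simp add: lin_iff)

lemma lin_compose: "lin s1 s2 f \<Longrightarrow> lin s2 s3 g \<Longrightarrow> lin s1 s3 (\<lambda>x. g (f x))"
  by (simp add: lin_iff)

lemma lin_compose_add:
  assumes "lin s1 s2 f" "lin s1 s2 g" shows "lin s1 s2 (\<lambda>x. f x + g x)"
  using assms vector_space.vector_space_assms(1)[of s2] by (simp add: lin_iff algebra_simps)

lemma lin_compose_sub:
  assumes "lin s1 s2 f" "lin s1 s2 g" shows "lin s1 s2 (\<lambda>x. f x - g x)"
  using assms module.scale_right_diff_distrib[of s2] by (simp add: lin_iff module_iff_vector_space)

lemma lin_inv: assumes "lin s1 s2 f" "bij f" shows "lin s2 s1 (inv f)"
proof -
  have f_inv: "f (inv f y) = y" for y using assms(2) by (simp add: bij_is_surj surj_f_inv_f)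
  have "inv f (x + y) = inv f x + inv f y" "inv f (s2 c x) = s1 c (inv f x)" for x y c
    by (rule injD[OF bij_is_inj[OF assms(2)]], simp add: f_inv assms(1)[unfolded lin_iff])+
  then show ?thesis using assms(1) by (simp add: lin_iff)
qed

lemma lin_cancel_inj:
  assumes "lin s2 s3 i" "inj i" "lin s1 s3 G" "\<And>x. i (F x) = G x" and "vector_space s2"
  shows "lin s1 s2 F"
proof -
  have "i (F (x + y)) = i (F x + F y)" "i (F (s1 c x)) = i (s2 c (F x))" for x y c
    using assms(1,3,4) by (simp_all add: lin_iff)
  then show ?thesis
    using assms(2,3,5) by (simp add: lin_iff inj_eq)
qed

lemma image_range_eq_range:
  assumes "\<And>u. g (i u) = i (b u)" "surj b" shows "g ` range i = range i"
proof -
  have "g ` range i = i ` range b" by (auto simp: assms(1) image_iff)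
  then show ?thesis using assms(2) by simp
qed

section \<open>An abelian extension in the coordinates given by a section\<close>

locale com_prelie_extension =
  fixes sA :: "'k::field_char_0 \<Rightarrow> 'a::ab_group_add \<Rightarrow> 'a"
    and mA pA :: "'a \<Rightarrow> 'a \<Rightarrow> 'a"
    and sV :: "'k \<Rightarrow> 'v::ab_group_add \<Rightarrow> 'v"
    and \<mu> l r :: "'a \<Rightarrow> 'v \<Rightarrow> 'v"
    and sH :: "'k \<Rightarrow> 'h::ab_group_add \<Rightarrow> 'h"
    and mH pH :: "'h \<Rightarrow> 'h \<Rightarrow> 'h"
    and i :: "'v \<Rightarrow> 'h" and j :: "'h \<Rightarrow> 'a" and s :: "'a \<Rightarrow> 'h"
  assumes is_rep: "is_rep sA mA pA sV \<mu> l r"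
    and abelian_extension: "abelian_extension sA mA pA sV sH mH pH i j"
    and induces_rep: "induces_rep sA sH mH pH i j \<mu> l r"
    and lin_section: "lin_section sA sH j s"
begin

abbreviation "\<Z> \<equiv> Z1 sA mA pA sV \<mu> l r"
abbreviation "\<C> \<equiv> compat_pairs sA mA pA sV \<mu> l r"
abbreviation "Aut_V \<equiv> autV sH mH pH i"
abbreviation "Aut_VA \<equiv> autVA sH mH pH i j s"
abbreviation "\<tau> \<equiv> tau i j s"
abbreviation "\<iota> \<equiv> iota i j"
abbreviation "\<phi> \<equiv> ext_phi i s mH mA"
abbreviation "\<psi> \<equiv> ext_psi i s pH pA"

lemma vector_space_A: "vector_space sA" and vector_space_V: "vector_space sV"
  and vector_space_H: "vector_space sH"
  using abelian_extension is_rep by (auto simp: abelian_extension_def com_prelie_def is_rep_def)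

lemma lin_i: "lin sV sH i" and lin_j: "lin sH sA j" and lin_s: "lin sA sH s"
  using abelian_extension lin_section by (auto simp: abelian_extension_def com_prelie_hom_def lin_section_def)

lemma j_s [simp]: "j (s x) = x"
  using lin_section by (simp add: lin_section_def)

lemma inj_i: "inj i" and range_i: "range i = {h. j h = 0}"
  using abelian_extension by (auto simp: abelian_extension_def)

lemmas i_add [simp] = lin_add[OF lin_i] and i_diff [simp] = lin_diff[OF lin_i]
  and i_zero [simp] = lin_zero[OF lin_i]
  and j_add [simp] = lin_add[OF lin_j] and j_diff [simp] = lin_diff[OF lin_j]
  and j_zero [simp] = lin_zero[OF lin_j]
  and s_add [simp] = lin_add[OF lin_s] and s_zero [simp] = lin_zero[OF lin_s]

lemma i_eq_iff [simp]: "i u = i v \<longleftrightarrow> u = v"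
  using inj_i by (auto dest: injD)

lemma i_eq_zero_iff [simp]: "i u = 0 \<longleftrightarrow> u = 0"
  using i_eq_iff[of u 0] by simp

lemma j_i [simp]: "j (i u) = 0"
  using range_i by auto

lemma inv_i [simp]: "inv i (i u) = u"
  using inj_i by simp

lemma i_inv_i: "j h = 0 \<Longrightarrow> i (inv i h) = h"
  using range_i by (metis (mono_tags, lifting) f_inv_into_f mem_Collect_eq)

lemma j_mH [simp]: "j (mH h k) = mA (j h) (j k)" and j_pH [simp]: "j (pH h k) = pA (j h) (j k)"
  and mH_i_i [simp]: "mH (i u) (i v) = 0" and pH_i_i [simp]: "pH (i u) (i v) = 0"
  using abelian_extension by (auto simp: abelian_extension_def com_prelie_hom_def)

lemma mH_commute: "mH h k = mH k h"
  using abelian_extension by (auto simp: abelian_extension_def com_prelie_def)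

lemma lin_mH: "lin sH sH (mH h)" and lin_mH_left: "lin sH sH (\<lambda>k. mH k h)"
  and lin_pH: "lin sH sH (pH h)" and lin_pH_left: "lin sH sH (\<lambda>k. pH k h)"
  using abelian_extension by (auto simp: abelian_extension_def com_prelie_def bilin_def)

lemmas mH_add [simp] = lin_add[OF lin_mH] and mH_add_left [simp] = lin_add[OF lin_mH_left]
  and pH_add [simp] = lin_add[OF lin_pH] and pH_add_left [simp] = lin_add[OF lin_pH_left]

lemma lin_\<mu>: "lin sV sV (\<mu> x)" and lin_l: "lin sV sV (l x)" and lin_r: "lin sV sV (r x)"
  and lin_\<mu>_left: "lin sA sV (\<lambda>x. \<mu> x u)" and lin_l_left: "lin sA sV (\<lambda>x. l x u)"
  and lin_r_left: "lin sA sV (\<lambda>x. r x u)"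
  using is_rep by (auto simp: is_rep_def bilin_def)

lemmas \<mu>_add [simp] = lin_add[OF lin_\<mu>] and l_add [simp] = lin_add[OF lin_l]
  and r_add [simp] = lin_add[OF lin_r]

lemma \<mu>_zero_left [simp]: "\<mu> 0 u = 0" and l_zero_left [simp]: "l 0 u = 0"
  and r_zero_left [simp]: "r 0 u = 0"
  using lin_zero[OF lin_\<mu>_left] lin_zero[OF lin_l_left] lin_zero[OF lin_r_left] by simp_all

lemma lin_through_i: "lin sX sH G \<Longrightarrow> (\<And>x. i (F x) = G x) \<Longrightarrow> lin sX sV F"
  by (rule lin_cancel_inj[OF lin_i inj_i _ _ vector_space_V])

definition proj_V :: "'h \<Rightarrow> 'v"
  where "proj_V h = inv i (h - s (j h))"

lemma i_proj_V: "i (proj_V h) = h - s (j h)"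
  unfolding proj_V_def by (rule i_inv_i) simp

lemma split_section: "h = s (j h) + i (proj_V h)"
  by (simp add: i_proj_V)

lemma proj_V_split [simp]: "proj_V (s x + i u) = u"
  using i_proj_V[of "s x + i u"] by simp

lemma proj_V_i [simp]: "proj_V (i u) = u"
  using proj_V_split[of 0 u] by simp

lemma lin_proj_V: "lin sH sV proj_V"
  by (rule lin_through_i[OF _ i_proj_V])
    (intro lin_compose_sub lin_id vector_space_H lin_compose[OF lin_j lin_s])

lemma induced_\<mu>: "mH (s x) (i u) = i (\<mu> x u)" and induced_l: "pH (s x) (i u) = i (l x u)"
  and induced_r: "pH (i u) (s x) = i (r x u)"
  using induces_rep lin_section by (auto simp: induces_rep_def)

lemma mH_i [simp]: "mH h (i u) = i (\<mu> (j h) u)"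
proof -
  have "mH h (i u) = mH (s (j h) + i (proj_V h)) (i u)" by (simp only: split_section[symmetric])
  then show ?thesis by (simp add: induced_\<mu>)
qed

lemma mH_i_left [simp]: "mH (i u) h = i (\<mu> (j h) u)"
  by (metis mH_commute mH_i)

lemma pH_i [simp]: "pH h (i u) = i (l (j h) u)"
proof -
  have "pH h (i u) = pH (s (j h) + i (proj_V h)) (i u)" by (simp only: split_section[symmetric])
  then show ?thesis by (simp add: induced_l)
qed

lemma pH_i_left [simp]: "pH (i u) h = i (r (j h) u)"
proof -
  have "pH (i u) h = pH (i u) (s (j h) + i (proj_V h))" by (simp only: split_section[symmetric])
  then show ?thesis by (simp add: induced_r)
qed

lemma i_\<phi>: "i (\<phi> x y) = mH (s x) (s y) - s (mA x y)"
  unfolding ext_phi_def by (rule i_inv_i) simp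

lemma i_\<psi>: "i (\<psi> x y) = pH (s x) (s y) - s (pA x y)"
  unfolding ext_psi_def by (rule i_inv_i) simp

lemma mH_split: "mH (s x + i u) (s y + i v) = s (mA x y) + i (\<phi> x y + \<mu> x v + \<mu> y u)"
  by (simp add: i_\<phi>)

lemma pH_split: "pH (s x + i u) (s y + i v) = s (pA x y) + i (\<psi> x y + l x v + r y u)"
  by (simp add: i_\<psi>)

lemma compat_pairsD:
  assumes "(b, a) \<in> \<C>"
  shows "lin sV sV b" "bij b" "lin sA sA a" "bij a"
    "a (mA x y) = mA (a x) (a y)" "a (pA x y) = pA (a x) (a y)"
    "b (\<mu> x u) = \<mu> (a x) (b u)" "b (l x u) = l (a x) (b u)" "b (r x u) = r (a x) (b u)"
  using assms by (auto simp: compat_pairs_def lin_auts_def com_prelie_auts_def com_prelie_hom_def)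

lemma id_in_compat_pairs: "(id, id) \<in> \<C>"
  using lin_id[OF vector_space_V, folded id_def] lin_id[OF vector_space_A, folded id_def]
  by (simp add: compat_pairs_def lin_auts_def com_prelie_auts_def com_prelie_hom_def)

text \<open>For a compatible pair \<open>(b, a)\<close> and \<open>F = f \<circ> a\<close>, the defects vanish at \<open>(x, y)\<close> iff
  the cocycle difference of the Wells map equals the coboundary of \<open>f\<close> at \<open>(a x, a y)\<close>.\<close>

definition mul_defect :: "('v \<Rightarrow> 'v) \<Rightarrow> ('a \<Rightarrow> 'a) \<Rightarrow> ('a \<Rightarrow> 'v) \<Rightarrow> 'a \<Rightarrow> 'a \<Rightarrow> 'v"
  where "mul_defect b a F x y =
    \<mu> (a x) (F y) - F (mA x y) + \<mu> (a y) (F x) - (b (\<phi> x y) - \<phi> (a x) (a y))"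

definition pl_defect :: "('v \<Rightarrow> 'v) \<Rightarrow> ('a \<Rightarrow> 'a) \<Rightarrow> ('a \<Rightarrow> 'v) \<Rightarrow> 'a \<Rightarrow> 'a \<Rightarrow> 'v"
  where "pl_defect b a F x y =
    l (a x) (F y) - F (pA x y) + r (a y) (F x) - (b (\<psi> x y) - \<psi> (a x) (a y))"

lemma Z1_iff_defects:
  "N \<in> \<Z> \<longleftrightarrow> lin sA sV N \<and> (\<forall>x y. mul_defect id id N x y = 0 \<and> pl_defect id id N x y = 0)"
  unfolding Z1_def mul_defect_def pl_defect_def by auto

lemma wells_zero_iff_defects:
  assumes C: "(b, a) \<in> \<C>"
  shows "wells_zero sA mA pA sV \<mu> l r mH pH i s b a \<longleftrightarrow>
    (\<exists>F. lin sA sV F \<and> (\<forall>x y. mul_defect b a F x y = 0 \<and> pl_defect b a F x y = 0))"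
proof
  have inv_a: "inv a (a x) = x" for x
    using compat_pairsD(4)[OF C] by (simp add: bij_is_inj)
  assume "wells_zero sA mA pA sV \<mu> l r mH pH i s b a"
  then obtain f where "lin sA sV f"
    and f: "\<And>x y. b (\<phi> (inv a x) (inv a y)) - \<phi> x y = \<mu> x (f y) - f (mA x y) + \<mu> y (f x)"
      "\<And>x y. b (\<psi> (inv a x) (inv a y)) - \<psi> x y = l x (f y) - f (pA x y) + r y (f x)"
    unfolding wells_zero_def is_coboundary_def by blast
  moreover have "mul_defect b a (\<lambda>x. f (a x)) x y = 0" "pl_defect b a (\<lambda>x. f (a x)) x y = 0" for x y
    using f[of "a x" "a y"] by (simp_all add: mul_defect_def pl_defect_def inv_a compat_pairsD(5,6)[OF C])
  ultimately show "\<exists>F. lin sA sV F \<and> (\<forall>x y. mul_defect b a F x y = 0 \<and> pl_defect b a F x y = 0)"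
    using lin_compose[OF compat_pairsD(3)[OF C]] by blast
next
  have a_inv: "a (inv a x) = x" for x
    using compat_pairsD(4)[OF C] by (simp add: bij_is_surj surj_f_inv_f)
  have inv_a: "inv a (a x) = x" for x
    using compat_pairsD(4)[OF C] by (simp add: bij_is_inj)
  have inv_a_mA: "inv a (mA x y) = mA (inv a x) (inv a y)" for x y
    by (metis a_inv inv_a compat_pairsD(5)[OF C])
  have inv_a_pA: "inv a (pA x y) = pA (inv a x) (inv a y)" for x y
    by (metis a_inv inv_a compat_pairsD(6)[OF C])
  assume "\<exists>F. lin sA sV F \<and> (\<forall>x y. mul_defect b a F x y = 0 \<and> pl_defect b a F x y = 0)"
  then obtain F where "lin sA sV F" and F: "\<And>x y. mul_defect b a F x y = 0" "\<And>x y. pl_defect b a F x y = 0"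
    by blast
  then have "lin sA sV (\<lambda>x. F (inv a x))"
    using lin_compose[OF lin_inv[OF compat_pairsD(3,4)[OF C]]] by blast
  then show "wells_zero sA mA pA sV \<mu> l r mH pH i s b a"
    using F[of "inv a x" "inv a y" for x y]
    unfolding wells_zero_def is_coboundary_def mul_defect_def pl_defect_def
    by (auto simp: a_inv inv_a_mA inv_a_pA)
qed

section \<open>Automorphisms of the extension\<close>

definition lift_map :: "('v \<Rightarrow> 'v) \<Rightarrow> ('a \<Rightarrow> 'a) \<Rightarrow> ('a \<Rightarrow> 'v) \<Rightarrow> 'h \<Rightarrow> 'h"
  where "lift_map b a F h = s (a (j h)) + i (F (j h) + b (proj_V h))"

lemma lift_map_split [simp]: "lift_map b a F (s x + i u) = s (a x) + i (F x + b u)"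
  by (simp add: lift_map_def)

lemma j_lift_map [simp]: "j (lift_map b a F h) = a (j h)"
  by (simp add: lift_map_def)

lemma lift_map_i: "lin sA sA a \<Longrightarrow> lin sA sV F \<Longrightarrow> lift_map b a F (i u) = i (b u)"
  by (simp add: lift_map_def lin_zero)

lemma lin_lift_map:
  assumes "lin sV sV b" "lin sA sA a" "lin sA sV F"
  shows "lin sH sH (lift_map b a F)"
proof -
  have "lin sH sH (\<lambda>h. s (a (j h)))"
    by (intro lin_compose[OF lin_compose[OF lin_j assms(2)] lin_s])
  moreover have "lin sH sH (\<lambda>h. i (F (j h) + b (proj_V h)))"
    by (intro lin_compose[OF _ lin_i] lin_compose_add lin_compose[OF lin_j assms(3)]
        lin_compose[OF lin_proj_V assms(1)])
  ultimately show ?thesis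
    unfolding lift_map_def[abs_def] by (rule lin_compose_add)
qed

lemma bij_lift_map:
  assumes "bij b" "bij a" shows "bij (lift_map b a F)"
proof (rule bijI)
  show "inj (lift_map b a F)"
  proof (rule injI)
    fix h k assume eq: "lift_map b a F h = lift_map b a F k"
    then have "a (j h) = a (j k)" by (metis j_lift_map)
    then have jhk: "j h = j k" using assms(2) by (simp add: bij_is_inj inj_eq)
    then have "b (proj_V h) = b (proj_V k)" using eq by (simp add: lift_map_def)
    then have "proj_V h = proj_V k" using assms(1) by (simp add: bij_is_inj inj_eq)
    with jhk show "h = k" by (metis split_section)
  qed
  have a_inv: "a (inv a x) = x" and b_inv: "b (inv b u) = u" for x u
    using assms by (simp_all add: bij_is_surj surj_f_inv_f)
  show "surj (lift_map b a F)"
  proof (rule surjI)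
    fix h
    show "lift_map b a F (s (inv a (j h)) + i (inv b (proj_V h - F (inv a (j h))))) = h"
      by (simp add: a_inv b_inv flip: split_section)
  qed
qed

lemma tau_lift_map: "lin sA sA a \<Longrightarrow> lin sA sV F \<Longrightarrow> \<tau> (lift_map b a F) = (b, a)"
  by (simp add: tau_def restrV_def lift_map_i)

lemma lift_map_mH_defect:
  assumes C: "(b, a) \<in> \<C>"
  shows "mH (lift_map b a F h) (lift_map b a F k) - lift_map b a F (mH h k)
    = i (mul_defect b a F (j h) (j k))"
proof -
  obtain x u y v where hk: "h = s x + i u" "k = s y + i v"
    using split_section by metis
  have "lift_map b a F (mH h k)
      = s (mA (a x) (a y)) + i (F (mA x y) + b (\<phi> x y) + \<mu> (a x) (b v) + \<mu> (a y) (b u))"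
    by (simp only: hk mH_split lift_map_split)
      (simp add: lin_add[OF compat_pairsD(1)[OF C]] compat_pairsD(5,7)[OF C] add.assoc)
  moreover have "mH (lift_map b a F h) (lift_map b a F k)
      = s (mA (a x) (a y)) + i (\<phi> (a x) (a y) + \<mu> (a x) (F y + b v) + \<mu> (a y) (F x + b u))"
    by (simp only: hk lift_map_split mH_split)
  ultimately show ?thesis
    by (simp add: hk mul_defect_def algebra_simps)
qed

lemma lift_map_pH_defect:
  assumes C: "(b, a) \<in> \<C>"
  shows "pH (lift_map b a F h) (lift_map b a F k) - lift_map b a F (pH h k)
    = i (pl_defect b a F (j h) (j k))"
proof -
  obtain x u y v where hk: "h = s x + i u" "k = s y + i v"
    using split_section by metis
  have "lift_map b a F (pH h k)
      = s (pA (a x) (a y)) + i (F (pA x y) + b (\<psi> x y) + l (a x) (b v) + r (a y) (b u))"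
    by (simp only: hk pH_split lift_map_split)
      (simp add: lin_add[OF compat_pairsD(1)[OF C]] compat_pairsD(6,8,9)[OF C] add.assoc)
  moreover have "pH (lift_map b a F h) (lift_map b a F k)
      = s (pA (a x) (a y)) + i (\<psi> (a x) (a y) + l (a x) (F y + b v) + r (a y) (F x + b u))"
    by (simp only: hk lift_map_split pH_split)
  ultimately show ?thesis
    by (simp add: hk pl_defect_def algebra_simps)
qed

lemma lift_map_in_autV:
  assumes C: "(b, a) \<in> \<C>" and F: "lin sA sV F"
    and "\<And>x y. mul_defect b a F x y = 0" "\<And>x y. pl_defect b a F x y = 0"
  shows "lift_map b a F \<in> Aut_V"
proof -
  have "lift_map b a F (mH h k) = mH (lift_map b a F h) (lift_map b a F k)"
    and "lift_map b a F (pH h k) = pH (lift_map b a F h) (lift_map b a F k)" for h k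
    using lift_map_mH_defect[OF C, of F h k] lift_map_pH_defect[OF C, of F h k] assms(3,4)
    by simp_all
  moreover have "lift_map b a F ` range i = range i"
    by (rule image_range_eq_range[where b = b])
      (simp_all add: lift_map_i[OF compat_pairsD(3)[OF C] F] bij_is_surj[OF compat_pairsD(2)[OF C]])
  ultimately show ?thesis
    using lin_lift_map[OF compat_pairsD(1,3)[OF C] F] bij_lift_map[OF compat_pairsD(2,4)[OF C]]
    by (simp add: autV_def com_prelie_auts_def com_prelie_hom_def)
qed

lemma autVD:
  assumes "g \<in> Aut_V"
  shows "lin sH sH g" "bij g" "g (mH h k) = mH (g h) (g k)" "g (pH h k) = pH (g h) (g k)"
    "g ` range i = range i"
  using assms by (auto simp: autV_def com_prelie_auts_def com_prelie_hom_def)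

lemma lin_proj_V_comp:
  "g \<in> Aut_V \<Longrightarrow> lin sA sV (\<lambda>x. proj_V (g (s x)))"
  by (rule lin_compose[OF lin_compose[OF lin_s autVD(1)] lin_proj_V])

lemma autV_i: "g \<in> Aut_V \<Longrightarrow> g (i u) = i (restrV i g u)"
  unfolding restrV_def by (metis autVD(5) f_inv_into_f image_eqI rangeI)

lemma autV_j: "g \<in> Aut_V \<Longrightarrow> j (g h) = j (g (s (j h)))"
  by (subst split_section[of h]) (simp add: lin_add[OF autVD(1)] autV_i)

lemma autV_eq_lift_map:
  assumes g: "g \<in> Aut_V"
  shows "g = lift_map (restrV i g) (\<lambda>x. j (g (s x))) (\<lambda>x. proj_V (g (s x)))"
proof
  fix h
  have gs: "g (s (j h)) = s (j (g (s (j h)))) + i (proj_V (g (s (j h))))"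
    by (rule split_section)
  have "g h = g (s (j h) + i (proj_V h))"
    by (simp only: split_section[symmetric])
  also have "\<dots> = g (s (j h)) + i (restrV i g (proj_V h))"
    by (simp only: lin_add[OF autVD(1)[OF g]] autV_i[OF g])
  finally show "g h = lift_map (restrV i g) (\<lambda>x. j (g (s x))) (\<lambda>x. proj_V (g (s x))) h"
    by (subst (asm) gs) (simp add: lift_map_def add.assoc)
qed

lemma restrV_in_lin_auts:
  assumes g: "g \<in> Aut_V" shows "restrV i g \<in> lin_auts sV"
proof -
  have "lin sV sV (restrV i g)"
    by (rule lin_through_i[OF lin_compose[OF lin_i autVD(1)[OF g]]]) (simp add: autV_i[OF g])
  moreover have "inj (restrV i g)"
    by (rule injI) (metis autV_i[OF g] autVD(2)[OF g] bij_is_inj i_eq_iff inj_eq)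
  moreover have "surj (restrV i g)"
    unfolding surj_def
  proof
    fix w
    have "i w \<in> g ` range i" using autVD(5)[OF g] by simp
    then obtain u where "i w = g (i u)" by auto
    then show "\<exists>u. w = restrV i g u" using autV_i[OF g] by auto
  qed
  ultimately show ?thesis
    by (simp add: lin_auts_def bij_def)
qed

lemma induced_aut_in_com_prelie_auts:
  assumes g: "g \<in> Aut_V" shows "(\<lambda>x. j (g (s x))) \<in> com_prelie_auts sA mA pA"
proof -
  note gl = autVD(1)[OF g] and g_inj = bij_is_inj[OF autVD(2)[OF g]]
  have "lin sA sA (\<lambda>x. j (g (s x)))"
    by (rule lin_compose[OF lin_compose[OF lin_s gl] lin_j])
  moreover have "j (g (s (mA x y))) = mA (j (g (s x))) (j (g (s y)))"
    and "j (g (s (pA x y))) = pA (j (g (s x))) (j (g (s y)))" for x y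
    using autV_j[OF g, of "mH (s x) (s y)"] autV_j[OF g, of "pH (s x) (s y)"]
    by (simp_all add: autVD(3,4)[OF g])
  moreover have "inj (\<lambda>x. j (g (s x)))"
  proof (rule injI)
    fix x y assume "j (g (s x)) = j (g (s y))"
    then have "g (s x - s y) \<in> g ` range i"
      using autVD(5)[OF g] range_i by (simp add: lin_diff[OF gl])
    then have "s x - s y \<in> range i"
      using g_inj by (auto simp: inj_image_mem_iff)
    then show "x = y" using range_i by simp
  qed
  moreover have "surj (\<lambda>x. j (g (s x)))"
    unfolding surj_def
  proof
    fix y
    obtain h where "g h = s y" using autVD(2)[OF g] by (metis bij_is_surj surjD)
    then show "\<exists>x. y = j (g (s x))" using autV_j[OF g, of h] by auto
  qed
  ultimately show ?thesis
    by (simp add: com_prelie_auts_def com_prelie_hom_def bij_def)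
qed

lemma tau_in_compat_pairs:
  assumes g: "g \<in> Aut_V" shows "\<tau> g \<in> \<C>"
proof -
  have "restrV i g (\<mu> x u) = \<mu> (j (g (s x))) (restrV i g u)"
    and "restrV i g (l x u) = l (j (g (s x))) (restrV i g u)"
    and "restrV i g (r x u) = r (j (g (s x))) (restrV i g u)" for x u
    using autVD(3,4)[OF g, of "s x" "i u"] autVD(4)[OF g, of "i u" "s x"]
    by (simp_all add: autV_i[OF g] induced_\<mu> induced_l induced_r)
  then show ?thesis
    using restrV_in_lin_auts[OF g] induced_aut_in_com_prelie_auts[OF g]
    by (simp add: tau_def compat_pairs_def)
qed

lemma autV_defects_vanish:
  assumes g: "g \<in> Aut_V"
  shows "mul_defect (restrV i g) (\<lambda>x. j (g (s x))) (\<lambda>x. proj_V (g (s x))) x y = 0"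
    and "pl_defect (restrV i g) (\<lambda>x. j (g (s x))) (\<lambda>x. proj_V (g (s x))) x y = 0"
proof -
  have C: "(restrV i g, \<lambda>x. j (g (s x))) \<in> \<C>"
    using tau_in_compat_pairs[OF g] by (simp add: tau_def)
  show "mul_defect (restrV i g) (\<lambda>x. j (g (s x))) (\<lambda>x. proj_V (g (s x))) x y = 0"
    using lift_map_mH_defect[OF C, of "\<lambda>x. proj_V (g (s x))" "s x" "s y",
        folded autV_eq_lift_map[OF g]]
    by (simp add: autVD(3)[OF g])
  show "pl_defect (restrV i g) (\<lambda>x. j (g (s x))) (\<lambda>x. proj_V (g (s x))) x y = 0"
    using lift_map_pH_defect[OF C, of "\<lambda>x. proj_V (g (s x))" "s x" "s y",
        folded autV_eq_lift_map[OF g]]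
    by (simp add: autVD(4)[OF g])
qed

lemma tau_comp:
  assumes g1: "g1 \<in> Aut_V" and g2: "g2 \<in> Aut_V"
  shows "\<tau> (g1 \<circ> g2) = (fst (\<tau> g1) \<circ> fst (\<tau> g2), snd (\<tau> g1) \<circ> snd (\<tau> g2))"
proof -
  have "restrV i (g1 \<circ> g2) u = restrV i g1 (restrV i g2 u)" for u
    unfolding restrV_def[of i "g1 \<circ> g2"] by (simp add: autV_i[OF g1] autV_i[OF g2])
  moreover have "j (g1 (g2 (s x))) = j (g1 (s (j (g2 (s x)))))" for x
    by (rule autV_j[OF g1])
  ultimately show ?thesis
    by (simp add: tau_def comp_def fun_eq_iff)
qed

lemma tau_image_autV:
  "\<tau> ` Aut_V = {(b, a) \<in> \<C>. wells_zero sA mA pA sV \<mu> l r mH pH i s b a}"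
proof (intro equalityI subsetI)
  fix p assume "p \<in> \<tau> ` Aut_V"
  then obtain g where g: "g \<in> Aut_V" and p: "p = \<tau> g" by blast
  show "p \<in> {(b, a) \<in> \<C>. wells_zero sA mA pA sV \<mu> l r mH pH i s b a}"
    using tau_in_compat_pairs[OF g] wells_zero_iff_defects autV_defects_vanish[OF g]
      lin_proj_V_comp[OF g]
    by (auto simp: p tau_def)
next
  fix p assume "p \<in> {(b, a) \<in> \<C>. wells_zero sA mA pA sV \<mu> l r mH pH i s b a}"
  then obtain b a F where C: "(b, a) \<in> \<C>" and p: "p = (b, a)" and "lin sA sV F"
    and "\<And>x y. mul_defect b a F x y = 0" "\<And>x y. pl_defect b a F x y = 0"
    using wells_zero_iff_defects by blast
  then show "p \<in> \<tau> ` Aut_V"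
    using lift_map_in_autV tau_lift_map[OF compat_pairsD(3)[OF C]] by (metis image_eqI)
qed

lemma iota_eq_lift_map: "\<iota> N = lift_map id id N"
  by (rule ext) (simp add: iota_def lift_map_def i_proj_V)

lemma iota_section_diff: "\<iota> N (s x) - s x = i (N x)"
  by (simp add: iota_def)

lemma iota_add: "\<iota> (\<lambda>x. N1 x + N2 x) = \<iota> N1 \<circ> \<iota> N2"
  by (rule ext) (simp add: iota_def algebra_simps)

lemma inj_on_iota: "inj_on \<iota> X"
proof (rule inj_onI)
  fix N1 N2 assume "\<iota> N1 = \<iota> N2"
  then have "i (N1 x) = i (N2 x)" for x by (metis iota_section_diff)
  then show "N1 = N2" by auto
qed

lemma autVA_eq_ker_tau: "Aut_VA = {g \<in> Aut_V. \<tau> g = (id, id)}"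
  by (auto simp: autVA_def tau_def)

lemma iota_in_autVA: "N \<in> \<Z> \<Longrightarrow> \<iota> N \<in> Aut_VA"
  using lift_map_in_autV[OF id_in_compat_pairs] tau_lift_map compat_pairsD(3)[OF id_in_compat_pairs]
  by (simp add: autVA_eq_ker_tau iota_eq_lift_map Z1_iff_defects)

lemma autVA_imp_iota:
  assumes "g \<in> Aut_VA" shows "\<exists>N \<in> \<Z>. g = \<iota> N"
proof
  have g: "g \<in> Aut_V" and b: "restrV i g = id" and a: "(\<lambda>x. j (g (s x))) = id"
    using assms by (auto simp: autVA_def)
  show "g = \<iota> (\<lambda>x. proj_V (g (s x)))"
    using autV_eq_lift_map[OF g] by (simp add: a b iota_eq_lift_map)
  show "(\<lambda>x. proj_V (g (s x))) \<in> \<Z>"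
    using autV_defects_vanish[OF g] lin_proj_V_comp[OF g] by (simp add: Z1_iff_defects a b)
qed

lemma ker_tau_eq_iota_image: "{g \<in> Aut_V. \<tau> g = (id, id)} = \<iota> ` \<Z>"
  using iota_in_autVA autVA_imp_iota by (auto simp flip: autVA_eq_ker_tau)

end

theorem theorem5p2:
  fixes sA :: "'k::field_char_0 \<Rightarrow> 'a::ab_group_add \<Rightarrow> 'a"
    and mA pA :: "'a \<Rightarrow> 'a \<Rightarrow> 'a"
    and sV :: "'k \<Rightarrow> 'v::ab_group_add \<Rightarrow> 'v"
    and \<mu> l r :: "'a \<Rightarrow> 'v \<Rightarrow> 'v"
    and sH :: "'k \<Rightarrow> 'h::ab_group_add \<Rightarrow> 'h"
    and mH pH :: "'h \<Rightarrow> 'h \<Rightarrow> 'h"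
    and i :: "'v \<Rightarrow> 'h" and j :: "'h \<Rightarrow> 'a" and s :: "'a \<Rightarrow> 'h"
  assumes rep: "is_rep sA mA pA sV \<mu> l r"
    and ext: "abelian_extension sA mA pA sV sH mH pH i j"
    and ind: "induces_rep sA sH mH pH i j \<mu> l r"
    and sec: "lin_section sA sH j s"
  shows
    \<comment> \<open>iota is the inverse of the isomorphism Aut^A_V(Ahat) -> Z^1(A,V), gamma |-> gamma s - s\<close>
    "(\<forall>N \<in> Z1 sA mA pA sV \<mu> l r. iota i j N \<in> autVA sH mH pH i j s
                                 \<and> (\<forall>x. iota i j N (s x) - s x = i (N x)))
     \<and> (\<forall>g \<in> autVA sH mH pH i j s. \<exists>N \<in> Z1 sA mA pA sV \<mu> l r. g = iota i j N)
     \<and> (\<forall>N1 \<in> Z1 sA mA pA sV \<mu> l r. \<forall>N2 \<in> Z1 sA mA pA sV \<mu> l r.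
          iota i j (\<lambda>x. N1 x + N2 x) = iota i j N1 \<circ> iota i j N2)
     \<comment> \<open>exactness at Z^1: iota injective\<close>
     \<and> inj_on (iota i j) (Z1 sA mA pA sV \<mu> l r)
     \<comment> \<open>tau is a group homomorphism with values in C\<close>
     \<and> (\<forall>g \<in> autV sH mH pH i. tau i j s g \<in> compat_pairs sA mA pA sV \<mu> l r)
     \<and> (\<forall>g1 \<in> autV sH mH pH i. \<forall>g2 \<in> autV sH mH pH i.
          tau i j s (g1 \<circ> g2) = (fst (tau i j s g1) \<circ> fst (tau i j s g2),
                                   snd (tau i j s g1) \<circ> snd (tau i j s g2)))
     \<comment> \<open>exactness at Aut_V(Ahat): ker tau = image of iota\<close>
     \<and> {g \<in> autV sH mH pH i. tau i j s g = (id, id)} = iota i j ` Z1 sA mA pA sV \<mu> l r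
     \<comment> \<open>exactness at C: image of tau = kernel of the Wells map\<close>
     \<and> tau i j s ` autV sH mH pH i
         = {(b, a) \<in> compat_pairs sA mA pA sV \<mu> l r. wells_zero sA mA pA sV \<mu> l r mH pH i s b a}"
proof -
  interpret com_prelie_extension sA mA pA sV \<mu> l r sH mH pH i j s
    using rep ext ind sec by (rule com_prelie_extension.intro)
  show ?thesis
    using iota_in_autVA iota_section_diff autVA_imp_iota iota_add inj_on_iota
      tau_in_compat_pairs tau_comp ker_tau_eq_iota_image tau_image_autV
    by blast
qed

end
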